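(* Assume $S\times M\neq\emptyset$, let $\varepsilon(t)=1/t^p$ on $[t_0,+\infty[$ with $p\in\,]0,1]$ and $t_0>0$, let $(x,\lambda):[t_0,+\infty[\ \to X\times Y$ be a solution of (AHT) with this $\varepsilon$, and for each $t\ge t_0$ let $(x_t,\lambda_t)$ be the unique zero of $T_t=T+\varepsilon(t)\mathrm{id}$. Then, as $t\to+\infty$, \[ \Big\|(\dot x(t),\dot\lambda(t))+\tfrac{1}{t^p}((x(t),\lambda(t))-(x_t,\lambda_t))\Big\|^2=\mathcal{O}\Big(e^{-2\rho(t)}+\tfrac{1}{t^{2p}}\Big),\qquad \|T(x(t),\lambda(t))-T(x_t,\lambda_t)\|^2=\mathcal{O}\Big(e^{-2\rho(t)}+\tfrac{1}{t^{2p}}\Big). \]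
   Context: $X,Y$ are real Hilbert spaces; $X\times Y$ carries the product inner product and norm $\|\cdot\|$. Standing assumptions: $f:X\to\mathbb{R}$ is convex and continuously differentiable with $\nabla f$ Lipschitz continuous on bounded subsets of $X$; $A:X\to Y$ is linear and continuous with adjoint $A^*$; $b\in Y$. $L(x,\lambda)=f(x)+\langle\lambda,Ax-b\rangle_Y$ and $T(x,\lambda)=(\nabla f(x)+A^*\lambda,\ b-Ax)$. $S$ is the set of optimal solutions of $\min\{f(x):Ax=b\}$, $M$ the set of Lagrange multipliers; $S\times M$ is the set of saddle points of $L$, equal to the zero set of $T$. $T_t=T+\varepsilon(t)\mathrm{id}$ is $\varepsilon(t)$-strongly monotone with unique zero $(x_t,\lambda_t)$. $\rho(t)=\int_{t_0}^t\varepsilon(\tau)\,d\tau$. (AHT) is the system $\dot x+\nabla f(x)+A^*\lambda+\varepsilon(t)x=0$, $\dot\lambda+b-Ax+\varepsilon(t)\lambda=0$; a solution is a continuously differentiable $(x,\lambda):[t_0,+\infty[\ \to X\times Y$ satisfying it on $[t_0,+\infty[$ (existence and uniqueness for every initial datum is assumed). *)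

theory Defs
  imports "HOL-Analysis.Analysis" "HOL-Library.Landau_Symbols"
begin

definition opt_sol :: "('a \<Rightarrow> real) \<Rightarrow> ('a \<Rightarrow> 'b) \<Rightarrow> 'b \<Rightarrow> 'a set" where
  "opt_sol f A b = {x. A x = b \<and> (\<forall>y. A y = b \<longrightarrow> f x \<le> f y)}"

definition lagr_mult :: "('a::real_vector \<Rightarrow> real) \<Rightarrow> ('a \<Rightarrow> 'a) \<Rightarrow> ('a \<Rightarrow> 'b) \<Rightarrow> ('b \<Rightarrow> 'a) \<Rightarrow> 'b \<Rightarrow> 'b set"
  where
  "lagr_mult f gradf A Aadj b = {lam. \<exists>x \<in> opt_sol f A b. gradf x + Aadj lam = 0}"

definition Top :: "('a::real_vector \<Rightarrow> 'a) \<Rightarrow> ('a \<Rightarrow> 'b::real_vector) \<Rightarrow> ('b \<Rightarrow> 'a) \<Rightarrow> 'b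
    \<Rightarrow> 'a \<times> 'b \<Rightarrow> 'a \<times> 'b" where
  "Top gradf A Aadj b z = (gradf (fst z) + Aadj (snd z), b - A (fst z))"

end

theory Submission
  imports Defs
begin

(* Write U = (x, lambda), V = U' and e t = 1 / t powr p, so that (AHT) reads V + T U + e U = 0.
   Since T (z t) = - e t z t, the expression in the theorem equals V + e (U - z t) =
   - (T U - T (z t)), and monotonicity of T against a saddle point u0 keeps U and z bounded.
   As T is only locally Lipschitz, V is merely continuous, so (norm V)^2 is differentiated in the
   sense of upper right Dini derivatives: difference quotients together with monotonicity and the
   Lipschitz bound give D+ (norm V)^2 <= - 2 <(e U)', V>.  This makes the Lyapunov function
   t^(2p)/2 (norm V)^2 + p t^(p-1)/2 (B^2 - (norm U)^2), with B a bound on norm U, nonincreasing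
   for t >= 1 (here p <= 1 is used), and its boundedness is exactly norm V <= C / t powr p. *)

section \<open>Upper right Dini derivatives\<close>

text \<open>The lim sup of (F (t + h) - F t) / h for h \<rightarrow> 0+ is at most D.\<close>

definition Dini_upper_le :: "(real \<Rightarrow> real) \<Rightarrow> real \<Rightarrow> real \<Rightarrow> bool" where
  "Dini_upper_le F t D \<longleftrightarrow> (\<forall>\<eta>>0. \<forall>\<^sub>F h in at_right 0. F (t + h) \<le> F t + (D + \<eta>) * h)"

lemma continuous_at_right_imp_tendsto_shift:
  fixes F :: "real \<Rightarrow> 'a::topological_space"
  shows "continuous (at_right t) F \<Longrightarrow> ((\<lambda>h. F (t + h)) \<longlongrightarrow> F t) (at_right 0)"
  by (simp add: continuous_within filterlim_at_right_to_0[of _ _ t] add.commute)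

lemma Dini_upper_le_mono:
  assumes "Dini_upper_le F t D" "D \<le> D'"
  shows "Dini_upper_le F t D'"
  unfolding Dini_upper_le_def
proof (intro allI impI)
  fix \<eta> :: real assume "\<eta> > 0"
  with assms(1) have "\<forall>\<^sub>F h in at_right 0. F (t + h) \<le> F t + (D + \<eta>) * h"
    by (simp add: Dini_upper_le_def)
  with eventually_at_right_less[of "0::real"]
  show "\<forall>\<^sub>F h in at_right 0. F (t + h) \<le> F t + (D' + \<eta>) * h"
    by eventually_elim (use assms(2) in \<open>smt (verit) mult_right_mono\<close>)
qed

lemma Dini_upper_le_add:
  assumes "Dini_upper_le F t D" "Dini_upper_le G t E"
  shows "Dini_upper_le (\<lambda>s. F s + G s) t (D + E)"
  unfolding Dini_upper_le_def
proof (intro allI impI)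
  fix \<eta> :: real assume "\<eta> > 0"
  then have "\<forall>\<^sub>F h in at_right 0. F (t + h) \<le> F t + (D + \<eta> / 2) * h"
    "\<forall>\<^sub>F h in at_right 0. G (t + h) \<le> G t + (E + \<eta> / 2) * h"
    using assms by (simp_all add: Dini_upper_le_def)
  then show "\<forall>\<^sub>F h in at_right 0. F (t + h) + G (t + h) \<le> F t + G t + (D + E + \<eta>) * h"
    by eventually_elim (simp add: algebra_simps)
qed

lemma Dini_upper_le_tendstoI:
  assumes "\<forall>\<^sub>F h in at_right 0. F (t + h) - F t \<le> h * Y h" and "(Y \<longlongrightarrow> D) (at_right 0)"
  shows "Dini_upper_le F t D"
  unfolding Dini_upper_le_def
proof (intro allI impI)
  fix \<eta> :: real assume "\<eta> > 0"
  then have "\<forall>\<^sub>F h in at_right 0. Y h < D + \<eta>"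
    using assms(2) by (intro order_tendstoD) auto
  with assms(1) eventually_at_right_less[of "0::real"]
  show "\<forall>\<^sub>F h in at_right 0. F (t + h) \<le> F t + (D + \<eta>) * h"
    by eventually_elim (smt (verit) mult_strict_left_mono mult.commute)
qed

lemma has_vector_derivative_imp_right_quotient_tendsto:
  fixes G :: "real \<Rightarrow> 'v::real_normed_vector"
  assumes "(G has_vector_derivative D) (at t within {t..})"
  shows "((\<lambda>h. (1 / h) *\<^sub>R (G (t + h) - G t)) \<longlongrightarrow> D) (at_right 0)"
proof -
  have "(G has_vector_derivative D) (at_right t)"
    using assms by (simp add: at_within_Ici_at_right)
  then have "((\<lambda>y. ((G y - G t) - (y - t) *\<^sub>R D) /\<^sub>R norm (y - t) + D) \<longlongrightarrow> 0 + D) (at_right t)"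
    unfolding has_vector_derivative_def has_derivative_at_within by (intro tendsto_add) auto
  moreover have "\<forall>\<^sub>F y in at_right t. ((G y - G t) - (y - t) *\<^sub>R D) /\<^sub>R norm (y - t) + D
      = (1 / (y - t)) *\<^sub>R (G y - G t)"
    using eventually_at_right_less[of t]
    by eventually_elim (simp add: scaleR_diff_right inverse_eq_divide)
  ultimately have "((\<lambda>y. (1 / (y - t)) *\<^sub>R (G y - G t)) \<longlongrightarrow> D) (at_right t)"
    by (simp add: tendsto_cong)
  then show ?thesis
    by (simp add: filterlim_at_right_to_0[of _ _ t] add.commute)
qed

lemma has_real_derivative_imp_right_quotient_tendsto:
  assumes "(F has_real_derivative D) (at t within {t..})"
  shows "((\<lambda>h. (F (t + h) - F t) / h) \<longlongrightarrow> D) (at_right 0)"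
  using has_vector_derivative_imp_right_quotient_tendsto[of F D t] assms
  by (simp add: has_real_derivative_iff_has_vector_derivative)

lemma has_real_derivative_imp_Dini_upper_le:
  assumes "(F has_real_derivative D) (at t within {t..})"
  shows "Dini_upper_le F t D"
proof (rule Dini_upper_le_tendstoI)
  show "((\<lambda>h. (F (t + h) - F t) / h) \<longlongrightarrow> D) (at_right 0)"
    by (rule has_real_derivative_imp_right_quotient_tendsto[OF assms])
  show "\<forall>\<^sub>F h in at_right 0. F (t + h) - F t \<le> h * ((F (t + h) - F t) / h)"
    using eventually_at_right_less[of "0::real"] by eventually_elim simp
qed

lemma Dini_upper_le_mult_left:
  assumes \<alpha>: "(\<alpha> has_real_derivative \<alpha>') (at t within {t..})" "0 \<le> \<alpha> t"
    and F_cont: "continuous (at_right t) F" and F: "Dini_upper_le F t D"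
  shows "Dini_upper_le (\<lambda>s. \<alpha> s * F s) t (\<alpha>' * F t + \<alpha> t * D)"
  unfolding Dini_upper_le_def
proof (intro allI impI)
  fix \<eta> :: real assume \<eta>: "\<eta> > 0"
  define \<eta>' where "\<eta>' = \<eta> / (2 * (\<alpha> t + 1))"
  have "\<eta>' > 0" "\<alpha> t * \<eta>' \<le> \<eta> / 2"
    using \<eta> \<alpha>(2) by (auto simp: \<eta>'_def field_simps)
  have "((\<lambda>h. (\<alpha> (t + h) - \<alpha> t) / h * F (t + h)) \<longlongrightarrow> \<alpha>' * F t) (at_right 0)"
  proof (intro tendsto_mult)
    show "((\<lambda>h. (\<alpha> (t + h) - \<alpha> t) / h) \<longlongrightarrow> \<alpha>') (at_right 0)"
      by (rule has_real_derivative_imp_right_quotient_tendsto[OF \<alpha>(1)])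
    show "((\<lambda>h. F (t + h)) \<longlongrightarrow> F t) (at_right 0)"
      by (rule continuous_at_right_imp_tendsto_shift[OF F_cont])
  qed
  then have "\<forall>\<^sub>F h in at_right 0. (\<alpha> (t + h) - \<alpha> t) / h * F (t + h) < \<alpha>' * F t + \<eta> / 2"
    using \<eta> by (intro order_tendstoD) auto
  moreover have "\<forall>\<^sub>F h in at_right 0. F (t + h) \<le> F t + (D + \<eta>') * h"
    using F \<open>\<eta>' > 0\<close> by (simp add: Dini_upper_le_def)
  ultimately show "\<forall>\<^sub>F h in at_right 0.
      \<alpha> (t + h) * F (t + h) \<le> \<alpha> t * F t + (\<alpha>' * F t + \<alpha> t * D + \<eta>) * h"
    using eventually_at_right_less[of "0::real"]
  proof eventually_elim
    case (elim h)
    have "\<alpha> (t + h) * F (t + h) = (\<alpha> (t + h) - \<alpha> t) / h * F (t + h) * h + \<alpha> t * F (t + h)"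
      using elim by (simp add: field_simps)
    also have "\<dots> \<le> (\<alpha>' * F t + \<eta> / 2) * h + \<alpha> t * (F t + (D + \<eta>') * h)"
      using elim \<alpha>(2) by (intro add_mono mult_right_mono mult_left_mono) auto
    also have "\<dots> \<le> \<alpha> t * F t + (\<alpha>' * F t + \<alpha> t * D + \<eta>) * h"
    proof -
      have "\<alpha> t * \<eta>' * h \<le> \<eta> / 2 * h"
        using \<open>\<alpha> t * \<eta>' \<le> \<eta> / 2\<close> elim by (intro mult_right_mono) auto
      then show ?thesis by (simp add: algebra_simps)
    qed
    finally show ?case .
  qed
qed

lemma Dini_upper_le_zero_imp_le:
  assumes ab: "a \<le> b" and cont: "continuous_on {a..b} F"
    and Dini: "\<And>t. a \<le> t \<Longrightarrow> t < b \<Longrightarrow> Dini_upper_le F t 0"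
  shows "F b \<le> F a"
proof (rule field_le_epsilon)
  fix \<epsilon> :: real assume "\<epsilon> > 0"
  define \<eta> where "\<eta> = \<epsilon> / (b - a + 1)"
  have "\<eta> > 0" "\<eta> * (b - a) \<le> \<epsilon>"
    using \<open>\<epsilon> > 0\<close> ab by (auto simp: \<eta>_def field_simps)
  define C where "C = {s \<in> {a..b}. F s \<le> F a + \<eta> * (s - a)}"
  have "closed C"
    unfolding C_def by (rule continuous_on_closed_Collect_le[OF cont]) (auto intro!: continuous_intros)
  moreover have "a \<in> C" using ab by (simp add: C_def)
  moreover have bdd: "bdd_above C" unfolding C_def by (auto intro: bdd_aboveI[of _ b])
  ultimately have "Sup C \<in> C" using closed_contains_Sup by blast
  \<comment> \<open>the last point of C cannot lie before b, since F grows with slope less than \<eta> right of it\<close>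
  have "Sup C = b"
  proof (rule ccontr)
    assume "Sup C \<noteq> b"
    with \<open>Sup C \<in> C\<close> have s: "a \<le> Sup C" "Sup C < b" "F (Sup C) \<le> F a + \<eta> * (Sup C - a)"
      by (auto simp: C_def)
    have "\<forall>\<^sub>F h in at_right 0. F (Sup C + h) \<le> F (Sup C) + (0 + \<eta>) * h"
      using Dini[OF s(1,2)] \<open>\<eta> > 0\<close> by (simp add: Dini_upper_le_def)
    moreover have "\<forall>\<^sub>F h in at_right 0. h < b - Sup C"
      using s(2) by (auto simp: eventually_at_right_field intro!: exI[of _ "b - Sup C"])
    moreover note eventually_at_right_less[of "0::real"]
    ultimately have "\<forall>\<^sub>F h in at_right 0. F (Sup C + h) \<le> F (Sup C) + \<eta> * h \<and> h < b - Sup C \<and> 0 < h"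
      by eventually_elim simp
    then obtain h where h: "F (Sup C + h) \<le> F (Sup C) + \<eta> * h" "h < b - Sup C" "0 < h"
      by (auto dest: eventually_happens)
    then have "Sup C + h \<in> C"
      using s by (auto simp: C_def algebra_simps)
    then have "Sup C + h \<le> Sup C" using bdd by (rule cSup_upper)
    with \<open>h > 0\<close> show False by simp
  qed
  with \<open>Sup C \<in> C\<close> \<open>\<eta> * (b - a) \<le> \<epsilon>\<close> show "F b \<le> F a + \<epsilon>"
    by (auto simp: C_def)
qed

lemma Dini_upper_le_max_const:
  assumes cont: "continuous (at_right t) F" and Dini: "c \<le> F t \<Longrightarrow> Dini_upper_le F t 0"
  shows "Dini_upper_le (\<lambda>s. max (F s) c) t 0"
  unfolding Dini_upper_le_def
proof (intro allI impI)
  fix \<eta> :: real assume "\<eta> > 0"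
  show "\<forall>\<^sub>F h in at_right 0. max (F (t + h)) c \<le> max (F t) c + (0 + \<eta>) * h"
  proof (cases "c \<le> F t")
    case True
    have "\<forall>\<^sub>F h in at_right 0. F (t + h) \<le> F t + (0 + \<eta>) * h"
      using Dini[OF True] \<open>\<eta> > 0\<close> by (simp add: Dini_upper_le_def)
    with eventually_at_right_less[of "0::real"] show ?thesis
    proof eventually_elim
      case (elim h)
      then show ?case using True mult_pos_pos[OF \<open>\<eta> > 0\<close> elim(1)] by (simp add: max_def)
    qed
  next
    case False
    then have "\<forall>\<^sub>F h in at_right 0. F (t + h) < c"
      by (intro order_tendstoD(2)[OF continuous_at_right_imp_tendsto_shift[OF cont]]) simp
    with eventually_at_right_less[of "0::real"] show ?thesis
      by eventually_elim (use False \<open>\<eta> > 0\<close> in auto)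
  qed
qed

lemma Dini_barrier_le:
  assumes ab: "a \<le> b" and cont: "continuous_on {a..b} F" and start: "F a \<le> c"
    and Dini: "\<And>t. a \<le> t \<Longrightarrow> t < b \<Longrightarrow> c \<le> F t \<Longrightarrow> Dini_upper_le F t 0"
  shows "F b \<le> c"
proof -
  have "max (F b) c \<le> max (F a) c"
  proof (rule Dini_upper_le_zero_imp_le[OF ab])
    show "continuous_on {a..b} (\<lambda>s. max (F s) c)"
      by (intro continuous_intros cont)
    fix t assume t: "a \<le> t" "t < b"
    have "continuous (at t within {t..b}) F"
      using continuous_on_subset[OF cont, of "{t..b}"] t by (simp add: continuous_on_eq_continuous_within)
    then have "continuous (at_right t) F"
      using t by (simp add: at_within_Icc_at_right)
    then show "Dini_upper_le (\<lambda>s. max (F s) c) t 0"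
      by (rule Dini_upper_le_max_const) (rule Dini[OF t])
  qed
  with start show ?thesis by simp
qed

section \<open>The saddle point operator\<close>

lemma convex_on_gradient_inequality:
  fixes f :: "'a::real_inner \<Rightarrow> real"
  assumes convex: "convex_on UNIV f"
    and grad: "\<And>u. (f has_derivative (\<lambda>h. inner (gradf u) h)) (at u)"
  shows "inner (gradf x) (y - x) \<le> f y - f x"
proof -
  define g where "g s = f (x + s *\<^sub>R (y - x))" for s :: real
  have "convex_on UNIV g"
  proof (rule convex_onI)
    fix t a c :: real assume "0 < t" "t < 1"
    have "x + ((1 - t) *\<^sub>R a + t *\<^sub>R c) *\<^sub>R (y - x)
        = (1 - t) *\<^sub>R (x + a *\<^sub>R (y - x)) + t *\<^sub>R (x + c *\<^sub>R (y - x))"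
      by (simp add: algebra_simps)
    then show "g ((1 - t) *\<^sub>R a + t *\<^sub>R c) \<le> (1 - t) * g a + t * g c"
      unfolding g_def using convex_onD[OF convex, of t] \<open>0 < t\<close> \<open>t < 1\<close> by auto
  qed auto
  moreover have "(g has_real_derivative inner (gradf x) (y - x)) (at 0)"
    unfolding g_def has_field_derivative_def
    by (rule has_derivative_eq_rhs, rule has_derivative_compose[OF _ grad])
      (auto intro!: derivative_eq_intros simp: fun_eq_iff)
  ultimately have "inner (gradf x) (y - x) * (1 - 0) \<le> g 1 - g 0"
    by (intro convex_on_imp_above_tangent) auto
  then show ?thesis by (simp add: g_def)
qed

lemma convex_on_gradient_monotone:
  fixes f :: "'a::real_inner \<Rightarrow> real"
  assumes "convex_on UNIV f" "\<And>u. (f has_derivative (\<lambda>h. inner (gradf u) h)) (at u)"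
  shows "0 \<le> inner (gradf x - gradf y) (x - y)"
  using convex_on_gradient_inequality[OF assms, of x y] convex_on_gradient_inequality[OF assms, of y x]
  by (simp add: inner_diff_left inner_diff_right inner_commute)

lemma adjoint_bounded_linear:
  fixes A :: "'a::real_inner \<Rightarrow> 'b::real_inner"
  assumes A: "bounded_linear A" and adj: "\<And>u w. inner (A u) w = inner u (Aadj w)"
  shows "bounded_linear Aadj"
proof -
  have eq: "a = c" if "\<And>u. inner u a = inner u c" for a c :: 'a
    using that[of "a - c"] by (metis inner_diff_right inner_eq_zero_iff right_minus_eq)
  have "linear Aadj"
    by (intro linearI eq) (simp_all add: inner_add_right flip: adj)
  obtain K where K: "0 \<le> K" "\<And>u. norm (A u) \<le> norm u * K"
    using bounded_linear.nonneg_bounded[OF A] by blast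
  have "norm (Aadj w) \<le> norm w * K" for w
  proof -
    have "(norm (Aadj w))\<^sup>2 = inner (A (Aadj w)) w"
      by (simp add: adj power2_norm_eq_inner)
    also have "\<dots> \<le> norm (A (Aadj w)) * norm w" by (rule norm_cauchy_schwarz)
    also have "\<dots> \<le> norm (Aadj w) * K * norm w" by (simp add: K(2) mult_right_mono)
    finally have "norm (Aadj w) * norm (Aadj w) \<le> (norm w * K) * norm (Aadj w)"
      by (simp add: power2_eq_square ac_simps)
    then show ?thesis
      using K(1) by (cases "Aadj w = 0") (auto simp: mult_le_cancel_right)
  qed
  with \<open>linear Aadj\<close> show ?thesis
    by (auto simp: bounded_linear_def bounded_linear_axioms_def)
qed

lemma Top_monotone:
  fixes f :: "'a::real_inner \<Rightarrow> real" and A :: "'a \<Rightarrow> 'b::real_inner"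
  assumes convex: "convex_on UNIV f"
    and grad: "\<And>u. (f has_derivative (\<lambda>h. inner (gradf u) h)) (at u)"
    and A: "bounded_linear A" and adj: "\<And>u w. inner (A u) w = inner u (Aadj w)"
  shows "0 \<le> inner (Top gradf A Aadj b u - Top gradf A Aadj b v) (u - v)"
proof -
  obtain x1 l1 x2 l2 where uv: "u = (x1, l1)" "v = (x2, l2)" by (cases u, cases v)
  interpret A: bounded_linear A by (rule A)
  interpret Aadj: bounded_linear Aadj by (rule adjoint_bounded_linear[OF A adj])
  have "inner (Top gradf A Aadj b u - Top gradf A Aadj b v) (u - v)
      = inner (gradf x1 - gradf x2) (x1 - x2) + inner (Aadj (l1 - l2)) (x1 - x2)
        - inner (A (x1 - x2)) (l1 - l2)"
    by (simp add: uv Top_def A.diff Aadj.diff inner_diff_left inner_diff_right inner_add_left)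
  also have "\<dots> = inner (gradf x1 - gradf x2) (x1 - x2)"
    using adj[of "x1 - x2" "l1 - l2"] by (simp add: inner_commute)
  finally show ?thesis
    using convex_on_gradient_monotone[OF convex grad] by simp
qed

lemma Top_lipschitz_on_bounded:
  fixes A :: "'a::real_inner \<Rightarrow> 'b::real_inner"
  assumes grad_lip: "\<And>B. bounded B \<Longrightarrow>
      \<exists>L. \<forall>u\<in>B. \<forall>v\<in>B. norm (gradf u - gradf v) \<le> L * norm (u - v)"
    and A: "bounded_linear A" and Aadj: "bounded_linear Aadj" and S: "bounded S"
  obtains K where "K-lipschitz_on S (Top gradf A Aadj b)"
proof -
  obtain L where L: "\<forall>u\<in>fst ` S. \<forall>v\<in>fst ` S. norm (gradf u - gradf v) \<le> L * norm (u - v)"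
    using grad_lip[OF bounded_fst[OF S]] by blast
  have "(max L 0)-lipschitz_on (fst ` S) gradf"
  proof (rule lipschitz_onI)
    fix u v assume "u \<in> fst ` S" "v \<in> fst ` S"
    then have "norm (gradf u - gradf v) \<le> L * norm (u - v)" using L by blast
    also have "\<dots> \<le> max L 0 * norm (u - v)" by (simp add: mult_right_mono)
    finally show "dist (gradf u) (gradf v) \<le> max L 0 * dist u v" by (simp add: dist_norm)
  qed simp
  moreover obtain Kfst where "Kfst-lipschitz_on S fst"
    using bounded_linear.lipschitz_boundE[OF bounded_linear_fst] .
  ultimately have grad: "(max L 0 * Kfst)-lipschitz_on S (\<lambda>z. gradf (fst z))"
    by (intro lipschitz_on_compose2)
  obtain Ksnd where adj: "Ksnd-lipschitz_on S (\<lambda>z. Aadj (snd z))"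
    using bounded_linear.lipschitz_boundE[OF bounded_linear_compose[OF Aadj bounded_linear_snd]] .
  obtain KA where lin: "KA-lipschitz_on S (\<lambda>z. A (fst z))"
    using bounded_linear.lipschitz_boundE[OF bounded_linear_compose[OF A bounded_linear_fst]] .
  have "Top gradf A Aadj b = (\<lambda>z. (gradf (fst z) + Aadj (snd z), b - A (fst z)))"
    by (simp add: fun_eq_iff Top_def)
  then have "(sqrt ((max L 0 * Kfst + Ksnd)\<^sup>2 + (0 + KA)\<^sup>2))-lipschitz_on S (Top gradf A Aadj b)"
    by (simp only:) (intro lipschitz_on_Pair lipschitz_on_add lipschitz_on_diff lipschitz_on_constant grad adj lin)
  then show ?thesis by (rule that)
qed

lemma Top_zero_if_saddle_point:
  assumes "opt_sol f A b \<times> lagr_mult f gradf A Aadj b \<noteq> {}"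
  obtains u0 where "Top gradf A Aadj b u0 = 0"
proof -
  obtain l where "l \<in> lagr_mult f gradf A Aadj b" using assms by auto
  then obtain x where "x \<in> opt_sol f A b" "gradf x + Aadj l = 0"
    by (auto simp: lagr_mult_def)
  then have "Top gradf A Aadj b (x, l) = 0"
    by (simp add: Top_def opt_sol_def zero_prod_def)
  then show ?thesis by (rule that)
qed

section \<open>Monotone flows with vanishing Tikhonov regularization\<close>

lemma power2_norm_increment_le:
  fixes a a' \<tau> d w :: "'v::real_inner"
  assumes h: "0 < h" and incr: "a' - a = - \<tau> - h *\<^sub>R w"
    and mono: "0 \<le> inner \<tau> d" and lip: "norm \<tau> \<le> h * K * norm d"
  shows "(norm a')\<^sup>2 - (norm a)\<^sup>2
    \<le> h * (2 * K * norm d * norm (a - d) - 2 * inner w a + norm (a' - a) * (K * norm d + norm w))"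
proof -
  have "(norm a')\<^sup>2 - (norm a)\<^sup>2 = 2 * inner (a' - a) a + (norm (a' - a))\<^sup>2"
    unfolding power2_norm_eq_inner by (simp add: inner_diff_left inner_diff_right inner_commute)
  moreover have "inner (a' - a) a = - inner \<tau> d - inner \<tau> (a - d) - h * inner w a"
    unfolding incr by (simp add: inner_diff_left inner_diff_right)
  moreover have "- inner \<tau> (a - d) \<le> h * K * norm d * norm (a - d)"
    using norm_cauchy_schwarz[of "- \<tau>" "a - d"] mult_right_mono[OF lip, of "norm (a - d)"]
    by simp
  moreover have "(norm (a' - a))\<^sup>2 \<le> norm (a' - a) * (h * (K * norm d + norm w))"
  proof -
    have "norm (a' - a) \<le> norm \<tau> + h * norm w"
      using norm_triangle_ineq[of "- \<tau>" "- (h *\<^sub>R w)"] h by (simp add: incr)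
    then have "norm (a' - a) \<le> h * (K * norm d + norm w)"
      using lip by (simp add: algebra_simps)
    then show ?thesis
      by (simp add: power2_eq_square mult_left_mono)
  qed
  ultimately show ?thesis
    using mono by (simp add: algebra_simps)
qed

lemma has_real_derivative_power2_norm:
  fixes G :: "real \<Rightarrow> 'v::real_inner"
  assumes "(G has_vector_derivative D) (at t within S)"
  shows "((\<lambda>s. (norm (G s))\<^sup>2) has_real_derivative 2 * inner (G t) D) (at t within S)"
  using bounded_bilinear.has_vector_derivative[OF bounded_bilinear_inner assms assms]
  by (simp add: power2_norm_eq_inner has_real_derivative_iff_has_vector_derivative inner_commute)

lemma monotone_regularized_zero_norm_le:
  fixes T :: "'v::real_inner \<Rightarrow> 'v"
  assumes monotone: "\<And>u v. 0 \<le> inner (T u - T v) (u - v)"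
    and "T u0 = 0" and "0 < c" and "T z + c *\<^sub>R z = 0"
  shows "norm z \<le> norm u0"
proof -
  have "0 \<le> inner (T z - T u0) (z - u0)" by (rule monotone)
  also have "\<dots> = - c * (inner z z - inner z u0)"
    using assms(2,4) by (simp add: eq_neg_iff_add_eq_0[symmetric] inner_diff_right algebra_simps)
  finally have "(norm z)\<^sup>2 \<le> inner z u0"
    using \<open>0 < c\<close> by (simp add: mult_le_0_iff power2_norm_eq_inner)
  also have "\<dots> \<le> norm z * norm u0" by (rule norm_cauchy_schwarz)
  finally show ?thesis
    by (cases "z = 0") (auto simp: power2_eq_square mult_le_cancel_left_pos)
qed

text \<open>U is the trajectory (x, \<lambda>) with velocity V, e the regularization parameter \<epsilon>, and u0 a
  zero of T (a saddle point).\<close>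

locale monotone_regularized_flow =
  fixes T :: "'v::real_inner \<Rightarrow> 'v" and e :: "real \<Rightarrow> real" and t0 :: real
    and U V :: "real \<Rightarrow> 'v" and u0 :: 'v
  assumes monotone: "\<And>u v. 0 \<le> inner (T u - T v) (u - v)"
    and lipschitz_on_bounded: "\<And>S. bounded S \<Longrightarrow> \<exists>K. K-lipschitz_on S T"
    and zero: "T u0 = 0"
    and e_pos: "\<And>t. t0 \<le> t \<Longrightarrow> 0 < e t"
    and U_deriv: "\<And>t. t0 \<le> t \<Longrightarrow> (U has_vector_derivative V t) (at t within {t0..})"
    and V_cont: "continuous_on {t0..} V"
    and flow: "\<And>t. t0 \<le> t \<Longrightarrow> V t + T (U t) + e t *\<^sub>R U t = 0"
begin

lemma U_cont: "continuous_on {t0..} U"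
  using U_deriv by (intro continuous_on_vector_derivative) auto

lemma U_deriv_right: "t0 \<le> t \<Longrightarrow> (U has_vector_derivative V t) (at t within {t..})"
  using U_deriv by (rule has_vector_derivative_within_subset) auto

lemma velocity_eq: "t0 \<le> t \<Longrightarrow> V t = - (T (U t) + e t *\<^sub>R U t)"
  using flow[of t] unfolding eq_neg_iff_add_eq_0 by (simp add: add.assoc)

lemma bounded_trajectory:
  obtains B where "\<And>t. t0 \<le> t \<Longrightarrow> norm (U t) \<le> B"
proof -
  define g where "g s = (norm (U s - u0))\<^sup>2" for s
  define c where "c = max (g t0) ((norm u0)\<^sup>2)"
  have "g t \<le> c" if "t0 \<le> t" for t
  proof (rule Dini_barrier_le[OF that])
    show "continuous_on {t0..t} g"
      unfolding g_def by (intro continuous_intros continuous_on_subset[OF U_cont]) auto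
    show "g t0 \<le> c" by (simp add: c_def)
    fix r assume r: "t0 \<le> r" "r < t" "c \<le> g r"
    have "(g has_real_derivative 2 * inner (U r - u0) (V r)) (at r within {r..})"
      unfolding g_def using U_deriv_right[OF r(1)]
      by (auto intro!: has_real_derivative_power2_norm derivative_eq_intros)
    moreover have "2 * inner (U r - u0) (V r) \<le> 0"
    proof -
      have "inner (U r - u0) (V r)
          = - inner (T (U r) - T u0) (U r - u0) - e r * inner (U r) (U r - u0)"
        by (simp add: velocity_eq r(1) zero inner_diff_left inner_diff_right inner_commute)
      moreover have "2 * inner (U r) (U r - u0) = (norm (U r))\<^sup>2 + g r - (norm u0)\<^sup>2"
        by (simp add: g_def power2_norm_eq_inner inner_diff_left inner_diff_right inner_commute)
      moreover have "0 \<le> e r * ((norm (U r))\<^sup>2 + g r - (norm u0)\<^sup>2)"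
        using e_pos[OF r(1)] r(3) by (intro mult_nonneg_nonneg) (auto simp: c_def intro!: add_increasing)
      ultimately show ?thesis
        using monotone[of "U r" u0] by (smt (verit) right_diff_distrib)
    qed
    ultimately show "Dini_upper_le g r 0"
      by (blast intro: Dini_upper_le_mono has_real_derivative_imp_Dini_upper_le)
  qed
  then have "norm (U t) \<le> norm u0 + sqrt c" if "t0 \<le> t" for t
    using norm_triangle_ineq[of "U t - u0" u0] real_le_rsqrt[of "norm (U t - u0)" c] that
    by (simp add: g_def)
  then show ?thesis using that by blast
qed

lemma regularized_zero_norm_le:
  assumes "t0 \<le> t" "T z + e t *\<^sub>R z = 0"
  shows "norm z \<le> norm u0"
  by (rule monotone_regularized_zero_norm_le[OF monotone zero e_pos[OF assms(1)] assms(2)])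

lemma residual_eq:
  assumes "t0 \<le> t" "T z + e t *\<^sub>R z = 0"
  shows "V t + e t *\<^sub>R (U t - z) = - (T (U t) - T z)"
proof -
  have "T z = - (e t *\<^sub>R z)"
    using assms(2) by (simp add: eq_neg_iff_add_eq_0)
  then show ?thesis
    by (simp add: velocity_eq[OF assms(1)] algebra_simps)
qed

lemma V_continuous_right: "t0 \<le> t \<Longrightarrow> continuous (at_right t) V"
  using V_cont by (auto simp: continuous_on_eq_continuous_within intro: continuous_within_subset)

lemma power2_norm_velocity_Dini:
  assumes s: "t0 \<le> s" and eU: "((\<lambda>t. e t *\<^sub>R U t) has_vector_derivative W) (at s within {s..})"
  shows "Dini_upper_le (\<lambda>t. (norm (V t))\<^sup>2) s (- 2 * inner W (V s))"
proof -
  obtain B where B: "\<And>t. t0 \<le> t \<Longrightarrow> norm (U t) \<le> B" using bounded_trajectory by blast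
  obtain K where K: "K-lipschitz_on (cball 0 B) T"
    using lipschitz_on_bounded[OF bounded_cball] by blast
  define d where "d h = (1 / h) *\<^sub>R (U (s + h) - U s)" for h
  define w where "w h = (1 / h) *\<^sub>R (e (s + h) *\<^sub>R U (s + h) - e s *\<^sub>R U s)" for h
  define Y where "Y h = 2 * K * norm (d h) * norm (V s - d h) - 2 * inner (w h) (V s)
    + norm (V (s + h) - V s) * (K * norm (d h) + norm (w h))" for h
  show ?thesis
  proof (rule Dini_upper_le_tendstoI)
    show "\<forall>\<^sub>F h in at_right 0. (norm (V (s + h)))\<^sup>2 - (norm (V s))\<^sup>2 \<le> h * Y h"
      using eventually_at_right_less[of "0::real"]
    proof eventually_elim
      case (elim h)
      have sh: "t0 \<le> s + h" using s elim by simp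
      show ?case unfolding Y_def
      proof (rule power2_norm_increment_le[OF elim])
        show "V (s + h) - V s = - (T (U (s + h)) - T (U s)) - h *\<^sub>R w h"
          unfolding velocity_eq[OF sh] velocity_eq[OF s] w_def using elim by (simp add: algebra_simps)
        show "0 \<le> inner (T (U (s + h)) - T (U s)) (d h)"
          using monotone[of "U (s + h)" "U s"] elim by (simp add: d_def)
        show "norm (T (U (s + h)) - T (U s)) \<le> h * K * norm (d h)"
          using lipschitz_on_normD[OF K, of "U (s + h)" "U s"] B[OF sh] B[OF s] elim
          by (simp add: d_def)
      qed
    qed
    have "((\<lambda>h. V (s + h)) \<longlongrightarrow> V s) (at_right 0)"
      by (rule continuous_at_right_imp_tendsto_shift[OF V_continuous_right[OF s]])
    then have "(Y \<longlongrightarrow> 2 * K * norm (V s) * norm (V s - V s) - 2 * inner W (V s)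
        + norm (V s - V s) * (K * norm (V s) + norm W)) (at_right 0)"
      unfolding Y_def d_def w_def
      by (intro tendsto_intros has_vector_derivative_imp_right_quotient_tendsto U_deriv_right s eU)
    then show "(Y \<longlongrightarrow> - 2 * inner W (V s)) (at_right 0)" by simp
  qed
qed

end

lemma power2_norm_bigo:
  fixes F :: "real \<Rightarrow> 'a::real_normed_vector" and g :: "real \<Rightarrow> real"
  assumes F: "\<forall>\<^sub>F t in at_top. norm (F t) \<le> K / t powr p" and g: "\<forall>\<^sub>F t in at_top. 0 \<le> g t"
  shows "(\<lambda>t. (norm (F t))\<^sup>2) \<in> O[at_top](\<lambda>t. g t + 1 / t powr (2 * p))"
proof (rule bigoI)
  show "\<forall>\<^sub>F t in at_top. norm ((norm (F t))\<^sup>2) \<le> K\<^sup>2 * norm (g t + 1 / t powr (2 * p))"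
    using F g eventually_gt_at_top[of 0]
  proof eventually_elim
    case (elim t)
    have "(norm (F t))\<^sup>2 \<le> (K / t powr p)\<^sup>2"
      using elim(1) by (intro power_mono) auto
    also have "\<dots> = K\<^sup>2 * (1 / t powr (2 * p))"
      using powr_add[of t p p] by (simp add: power_divide power2_eq_square)
    also have "\<dots> \<le> K\<^sup>2 * norm (g t + 1 / t powr (2 * p))"
      using elim(2,3) by (intro mult_left_mono) auto
    finally show ?case by simp
  qed
qed

locale power_regularized_flow = monotone_regularized_flow T "\<lambda>t. 1 / t powr p" t0 U V u0
  for T :: "'v::real_inner \<Rightarrow> 'v" and p t0 :: real and U V :: "real \<Rightarrow> 'v" and u0 :: 'v +
  assumes p_pos: "0 < p" and p_le_1: "p \<le> 1" and t0_pos: "0 < t0"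
begin

lemma weighted_kinetic_Dini:
  assumes s: "t0 \<le> s"
  shows "Dini_upper_le (\<lambda>t. (t powr p)\<^sup>2 / 2 * (norm (V t))\<^sup>2) s
    (s powr p * (p * s powr (p - 1) - 1) * (norm (V s))\<^sup>2 + p * s powr (p - 1) * inner (U s) (V s))"
proof -
  have "0 < s" using s t0_pos by simp
  define \<theta> where "\<theta> = p * s powr (p - 1)"
  define W where "W = (1 / s powr p) *\<^sub>R V s - (\<theta> / (s powr p)\<^sup>2) *\<^sub>R U s"
  have "((\<lambda>t. 1 / t powr p) has_real_derivative - \<theta> / (s powr p)\<^sup>2) (at s within {s..})"
    using \<open>0 < s\<close> by (auto intro!: derivative_eq_intros simp: \<theta>_def power2_eq_square)
  from has_vector_derivative_scaleR[OF this U_deriv_right[OF s]]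
  have "((\<lambda>t. (1 / t powr p) *\<^sub>R U t) has_vector_derivative W) (at s within {s..})"
    by (simp add: W_def)
  then have "Dini_upper_le (\<lambda>t. (norm (V t))\<^sup>2) s (- 2 * inner W (V s))"
    by (rule power2_norm_velocity_Dini[OF s])
  then have "Dini_upper_le (\<lambda>t. (t powr p)\<^sup>2 / 2 * (norm (V t))\<^sup>2) s
      (s powr p * \<theta> * (norm (V s))\<^sup>2 + (s powr p)\<^sup>2 / 2 * (- 2 * inner W (V s)))"
    using \<open>0 < s\<close> V_continuous_right[OF s]
    by (intro Dini_upper_le_mult_left)
      (auto intro!: derivative_eq_intros continuous_intros simp: \<theta>_def power2_eq_square)
  moreover have "(s powr p)\<^sup>2 * inner W (V s) = s powr p * (norm (V s))\<^sup>2 - \<theta> * inner (U s) (V s)"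
  proof -
    have "inner W (V s) = (norm (V s))\<^sup>2 / s powr p - \<theta> / (s powr p)\<^sup>2 * inner (U s) (V s)"
      by (simp add: W_def inner_diff_left power2_norm_eq_inner)
    then show ?thesis
      using \<open>0 < s\<close> by (simp add: field_simps power2_eq_square)
  qed
  ultimately show ?thesis
    by (elim Dini_upper_le_mono) (simp add: \<theta>_def algebra_simps)
qed

text \<open>The factor p s powr (p - 1) is the derivative of s powr p; the potential term absorbs the
  cross term it produces in the weighted kinetic energy.\<close>

definition lyapunov :: "real \<Rightarrow> real \<Rightarrow> real" where
  "lyapunov B s = (s powr p)\<^sup>2 / 2 * (norm (V s))\<^sup>2 + p * s powr (p - 1) / 2 * (B\<^sup>2 - (norm (U s))\<^sup>2)"

lemma lyapunov_Dini:
  assumes B: "\<And>t. t0 \<le> t \<Longrightarrow> norm (U t) \<le> B" and s: "max t0 1 \<le> s"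
  shows "Dini_upper_le (lyapunov B) s 0"
proof -
  have s0: "t0 \<le> s" "1 \<le> s" "0 < s" using s t0_pos by auto
  define \<theta> where "\<theta> = p * s powr (p - 1)"
  have "((\<lambda>t. p * t powr (p - 1) / 2) has_real_derivative p * ((p - 1) * s powr (p - 2)) / 2)
      (at s within {s..})"
    using s0 by (auto intro!: derivative_eq_intros simp: field_simps)
  from DERIV_mult[OF this DERIV_diff[OF DERIV_const[of "B\<^sup>2"]
        has_real_derivative_power2_norm[OF U_deriv_right[OF s0(1)]]]]
  have "((\<lambda>t. p * t powr (p - 1) / 2 * (B\<^sup>2 - (norm (U t))\<^sup>2)) has_real_derivative
      p * ((p - 1) * s powr (p - 2)) / 2 * (B\<^sup>2 - (norm (U s))\<^sup>2) - \<theta> * inner (U s) (V s))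
      (at s within {s..})"
    by (rule DERIV_cong) (simp add: \<theta>_def algebra_simps)
  from Dini_upper_le_add[OF weighted_kinetic_Dini[OF s0(1)] has_real_derivative_imp_Dini_upper_le[OF this]]
  have "Dini_upper_le (lyapunov B) s
      (s powr p * (\<theta> - 1) * (norm (V s))\<^sup>2 + p * (p - 1) * s powr (p - 2) / 2 * (B\<^sup>2 - (norm (U s))\<^sup>2))"
    unfolding lyapunov_def[abs_def] by (simp add: \<theta>_def algebra_simps)
  moreover have "\<theta> \<le> 1"
    using s0 p_pos p_le_1 powr_mono2'[of "p - 1" 1 s] by (simp add: \<theta>_def mult_le_one)
  moreover have "(norm (U s))\<^sup>2 \<le> B\<^sup>2"
    using B[OF s0(1)] by (simp add: power_mono)
  ultimately show ?thesis
    using p_pos p_le_1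
    by (elim Dini_upper_le_mono) (simp add: add_nonpos_nonpos mult_nonneg_nonpos mult_nonpos_nonneg)
qed

lemma velocity_decay:
  obtains C where "\<And>t. max t0 1 \<le> t \<Longrightarrow> norm (V t) \<le> C / t powr p"
proof -
  obtain B where B: "\<And>t. t0 \<le> t \<Longrightarrow> norm (U t) \<le> B" using bounded_trajectory by blast
  define t1 where "t1 = max t0 1"
  have "norm (V t) \<le> sqrt (2 * lyapunov B t1) / t powr p" if t: "t1 \<le> t" for t
  proof -
    have pos: "0 < t" "t0 \<le> t" using t t0_pos by (auto simp: t1_def)
    have "lyapunov B t \<le> lyapunov B t1"
    proof (rule Dini_upper_le_zero_imp_le[OF t])
      show "continuous_on {t1..t} (lyapunov B)"
        unfolding lyapunov_def[abs_def] using t0_pos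
        by (intro continuous_intros continuous_on_subset[OF U_cont] continuous_on_subset[OF V_cont])
          (auto simp: t1_def)
    qed (use lyapunov_Dini[OF B] in \<open>simp add: t1_def\<close>)
    moreover have "0 \<le> p * t powr (p - 1) / 2 * (B\<^sup>2 - (norm (U t))\<^sup>2)"
      using p_pos B[OF pos(2)] by (simp add: power_mono)
    ultimately have "(t powr p * norm (V t))\<^sup>2 \<le> 2 * lyapunov B t1"
      by (simp add: lyapunov_def power_mult_distrib)
    then have "t powr p * norm (V t) \<le> sqrt (2 * lyapunov B t1)"
      by (rule real_le_rsqrt)
    then show ?thesis
      using pos by (simp add: field_simps)
  qed
  then show ?thesis using that unfolding t1_def by blast
qed

lemma residual_decay:
  obtains K where "\<And>t z. max t0 1 \<le> t \<Longrightarrow> T z + (1 / t powr p) *\<^sub>R z = 0 \<Longrightarrow>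
    norm (V t + (1 / t powr p) *\<^sub>R (U t - z)) \<le> K / t powr p"
proof -
  obtain C where C: "\<And>t. max t0 1 \<le> t \<Longrightarrow> norm (V t) \<le> C / t powr p"
    using velocity_decay by blast
  obtain B where B: "\<And>t. t0 \<le> t \<Longrightarrow> norm (U t) \<le> B"
    using bounded_trajectory by blast
  have "norm (V t + (1 / t powr p) *\<^sub>R (U t - z)) \<le> (C + B + norm u0) / t powr p"
    if t: "max t0 1 \<le> t" and z: "T z + (1 / t powr p) *\<^sub>R z = 0" for t z
  proof -
    have "t0 \<le> t" using t by simp
    have "norm (V t + (1 / t powr p) *\<^sub>R (U t - z)) \<le> norm (V t) + 1 / t powr p * (norm (U t) + norm z)"
      using norm_triangle_ineq[of "V t" "(1 / t powr p) *\<^sub>R (U t - z)"]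
        mult_left_mono[OF norm_triangle_ineq4[of "U t" z], of "1 / t powr p"]
      by simp
    also have "\<dots> \<le> C / t powr p + 1 / t powr p * (B + norm u0)"
      using C[OF t] B[OF \<open>t0 \<le> t\<close>] regularized_zero_norm_le[OF \<open>t0 \<le> t\<close> z]
      by (intro add_mono mult_left_mono) auto
    finally show ?thesis by (simp add: add_divide_distrib)
  qed
  then show ?thesis using that by blast
qed


lemma residual_power2_bigo:
  assumes z: "\<And>t. t0 \<le> t \<Longrightarrow> T (z t) + (1 / t powr p) *\<^sub>R z t = 0"
  defines "rate \<equiv> \<lambda>t. exp (- 2 * integral {t0..t} (\<lambda>s. 1 / s powr p)) + 1 / t powr (2 * p)"
  shows "(\<lambda>t. (norm (V t + (1 / t powr p) *\<^sub>R (U t - z t)))\<^sup>2) \<in> O[at_top](rate)"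
    and "(\<lambda>t. (norm (T (U t) - T (z t)))\<^sup>2) \<in> O[at_top](rate)"
proof -
  obtain K where K: "\<And>t z. max t0 1 \<le> t \<Longrightarrow> T z + (1 / t powr p) *\<^sub>R z = 0 \<Longrightarrow>
      norm (V t + (1 / t powr p) *\<^sub>R (U t - z)) \<le> K / t powr p"
    using residual_decay by blast
  have "\<forall>\<^sub>F t in at_top. norm (V t + (1 / t powr p) *\<^sub>R (U t - z t)) \<le> K / t powr p
      \<and> norm (T (U t) - T (z t)) \<le> K / t powr p"
    using eventually_ge_at_top[of "max t0 1"]
  proof eventually_elim
    case (elim t)
    then have "t0 \<le> t" by simp
    with K[OF elim z] residual_eq[OF _ z] show ?case
      by (simp add: norm_minus_commute)
  qed
  then show "(\<lambda>t. (norm (V t + (1 / t powr p) *\<^sub>R (U t - z t)))\<^sup>2) \<in> O[at_top](rate)"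
    and "(\<lambda>t. (norm (T (U t) - T (z t)))\<^sup>2) \<in> O[at_top](rate)"
    unfolding rate_def by (auto intro!: power2_norm_bigo elim: eventually_mono)
qed
end

theorem proposition4p10:
  fixes f :: "'a::{real_inner,complete_space} \<Rightarrow> real"
    and gradf :: "'a \<Rightarrow> 'a"
    and A :: "'a \<Rightarrow> 'b::{real_inner,complete_space}"
    and Aadj :: "'b \<Rightarrow> 'a"
    and b :: 'b
    and p t0 :: real
    and x x' :: "real \<Rightarrow> 'a" and lam lam' :: "real \<Rightarrow> 'b"
    and z :: "real \<Rightarrow> 'a \<times> 'b"
  assumes f_convex: "convex_on UNIV f"
    and f_grad: "\<And>u. (f has_derivative (\<lambda>h. inner (gradf u) h)) (at u)"
    and grad_cont: "continuous_on UNIV gradf"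
    and grad_lip: "\<And>B. bounded B \<Longrightarrow>
        \<exists>L. \<forall>u\<in>B. \<forall>v\<in>B. norm (gradf u - gradf v) \<le> L * norm (u - v)"
    and A_lin: "bounded_linear A"
    and A_adj: "\<And>u w. inner (A u) w = inner u (Aadj w)"
    and SM_nonempty: "opt_sol f A b \<times> lagr_mult f gradf A Aadj b \<noteq> {}"
    and p_pos: "0 < p" and p_le: "p \<le> 1" and t0_pos: "0 < t0"
    and x_deriv: "\<And>t. t \<ge> t0 \<Longrightarrow> (x has_vector_derivative x' t) (at t within {t0..})"
    and lam_deriv: "\<And>t. t \<ge> t0 \<Longrightarrow> (lam has_vector_derivative lam' t) (at t within {t0..})"
    and x'_cont: "continuous_on {t0..} x'"
    and lam'_cont: "continuous_on {t0..} lam'"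
    and ode_x: "\<And>t. t \<ge> t0 \<Longrightarrow>
        x' t + gradf (x t) + Aadj (lam t) + (1 / t powr p) *\<^sub>R x t = 0"
    and ode_lam: "\<And>t. t \<ge> t0 \<Longrightarrow>
        lam' t + (b - A (x t)) + (1 / t powr p) *\<^sub>R lam t = 0"
    and z_zero: "\<And>t. t \<ge> t0 \<Longrightarrow> Top gradf A Aadj b (z t) + (1 / t powr p) *\<^sub>R z t = 0"
  shows "(\<lambda>t. (norm ((x' t, lam' t) + (1 / t powr p) *\<^sub>R ((x t, lam t) - z t)))\<^sup>2)
           \<in> O[at_top](\<lambda>t. exp (- 2 * integral {t0..t} (\<lambda>s. 1 / s powr p)) + 1 / t powr (2 * p)) \<and>
         (\<lambda>t. (norm (Top gradf A Aadj b (x t, lam t) - Top gradf A Aadj b (z t)))\<^sup>2)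
           \<in> O[at_top](\<lambda>t. exp (- 2 * integral {t0..t} (\<lambda>s. 1 / s powr p)) + 1 / t powr (2 * p))"
proof -
  let ?T = "Top gradf A Aadj b"
  obtain u0 where u0: "?T u0 = 0" by (rule Top_zero_if_saddle_point[OF SM_nonempty])
  have Aadj_lin: "bounded_linear Aadj" by (rule adjoint_bounded_linear[OF A_lin A_adj])
  interpret power_regularized_flow ?T p t0 "\<lambda>t. (x t, lam t)" "\<lambda>t. (x' t, lam' t)" u0
  proof
    show "0 \<le> inner (?T u - ?T v) (u - v)" for u v
      by (rule Top_monotone[OF f_convex f_grad A_lin A_adj])
    show "\<exists>K. K-lipschitz_on S ?T" if "bounded S" for S
      using Top_lipschitz_on_bounded[OF grad_lip A_lin Aadj_lin that] by blast
    show "((\<lambda>t. (x t, lam t)) has_vector_derivative (x' t, lam' t)) (at t within {t0..})" if "t0 \<le> t" for t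
      using x_deriv[OF that] lam_deriv[OF that] by (rule has_vector_derivative_Pair)
    show "(x' t, lam' t) + ?T (x t, lam t) + (1 / t powr p) *\<^sub>R (x t, lam t) = 0" if "t0 \<le> t" for t
      using ode_x[OF that] ode_lam[OF that] by (simp add: Top_def zero_prod_def algebra_simps)
  qed (use u0 p_pos p_le t0_pos x'_cont lam'_cont in \<open>auto intro: continuous_on_Pair\<close>)
  show ?thesis
    using residual_power2_bigo[OF z_zero] by simp
qed

end
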